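(* Let $c\in\mathbb{R}\setminus\{0\}$, $b>0$, $d\ge1$, and let $X=(\mathbb{R}/(b/c)\mathbb{Z})\times(\mathbb{R}/b\mathbb{Z})$ be the torus with coordinates $(t,x)$ (periodic in $t$ with period $b/c$ and in $x$ with period $b$). Let $W=C^1(X,\mathbb{R}^d)$ and let $\Sigma=\{u\in W\mid u(t+s,x+cs)=u(t,x)\ \text{for all } s\in\mathbb{R},(t,x)\in X\}$ be the travelling waves with wave speed $c$. Let $L\colon(\mathbb{R}^d)^3\to\mathbb{R}$ be an autonomous Lagrangian such that the action functional $S\colon W\to\mathbb{R}$, $$S(u)=\int_0^{b/c}\int_0^b L\big(u(t,x),u_t(t,x),u_x(t,x)\big)\,\mathrm{d}x\,\mathrm{d}t,$$ is continuously differentiable, and let $S_\Sigma\colon\Sigma\to\mathbb{R}$ be its restriction to $\Sigma$. Then a travelling wave $u\in\Sigma$ is a stationary point of $S$ if and only if $u$ is a stationary point of $S_\Sigma$. Moreover, using the identification $\Sigma\cong C^1(\mathbb{R}/b\mathbb{Z},\mathbb{R}^d)$ given by $u(t,x)=f(x-ct)=f(\xi)$, one has $$S_\Sigma(f)=\frac bc\int_0^b L\big(f(\xi),-cf_\xi(\xi),f_\xi(\xi)\big)\,\mathrm{d}\xi .$$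
   Context: A stationary point of $S$ (resp. $S_\Sigma$) is a point at which the derivative of $S$ vanishes in all directions of $W$ (resp. in all directions tangent to the linear subspace $\Sigma$). "Autonomous" means $L$ depends only on $(u,u_t,u_x)$ and not explicitly on $(t,x)$. *)

theory Defs
  imports "HOL-Analysis.Analysis"
begin

(* Functions on the torus X = (R/(b/c)Z) x (R/bZ) are represented as doubly periodic
   functions u :: real \<times> real \<Rightarrow> real^'d with coordinates (t,x). *)

definition pd_t :: "(real \<times> real \<Rightarrow> 'a::real_normed_vector) \<Rightarrow> real \<times> real \<Rightarrow> 'a" where
  "pd_t u p = frechet_derivative u (at p) (1, 0)"

definition pd_x :: "(real \<times> real \<Rightarrow> 'a::real_normed_vector) \<Rightarrow> real \<times> real \<Rightarrow> 'a" where
  "pd_x u p = frechet_derivative u (at p) (0, 1)"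

definition W :: "real \<Rightarrow> real \<Rightarrow> (real \<times> real \<Rightarrow> real^'d) set" where
  "W b c = {u. (\<forall>t x. u (t + b / c, x) = u (t, x) \<and> u (t, x + b) = u (t, x))
              \<and> (\<forall>p. u differentiable (at p))
              \<and> continuous_on UNIV (pd_t u) \<and> continuous_on UNIV (pd_x u)}"

definition Sigma_tw :: "real \<Rightarrow> real \<Rightarrow> (real \<times> real \<Rightarrow> real^'d) set" where
  "Sigma_tw b c = {u \<in> W b c. \<forall>s t x. u (t + s, x + c * s) = u (t, x)}"

definition c1norm :: "(real \<times> real \<Rightarrow> real^'d) \<Rightarrow> real" where
  "c1norm u = (SUP p. norm (u p)) + (SUP p. norm (pd_t u p)) + (SUP p. norm (pd_x u p))"

definition oint :: "real \<Rightarrow> real \<Rightarrow> (real \<Rightarrow> real) \<Rightarrow> real" where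
  "oint a b g = (if a \<le> b then integral {a..b} g else - integral {b..a} g)"

definition action :: "real \<Rightarrow> real \<Rightarrow> ((real^'d) \<times> (real^'d) \<times> (real^'d) \<Rightarrow> real)
                       \<Rightarrow> (real \<times> real \<Rightarrow> real^'d) \<Rightarrow> real" where
  "action b c L u = oint 0 (b / c)
     (\<lambda>t. oint 0 b (\<lambda>x. L (u (t, x), pd_t u (t, x), pd_x u (t, x))))"

definition frechet_on_W ::
  "real \<Rightarrow> real \<Rightarrow> ((real \<times> real \<Rightarrow> real^'d) \<Rightarrow> real) \<Rightarrow> (real \<times> real \<Rightarrow> real^'d)
     \<Rightarrow> ((real \<times> real \<Rightarrow> real^'d) \<Rightarrow> real) \<Rightarrow> bool" where
  "frechet_on_W b c F u D \<longleftrightarrow>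
     (\<forall>v\<in>W b c. \<forall>w\<in>W b c. D (\<lambda>p. v p + w p) = D v + D w)
   \<and> (\<forall>v\<in>W b c. \<forall>a::real. D (\<lambda>p. a *\<^sub>R v p) = a * D v)
   \<and> (\<exists>K. \<forall>v\<in>W b c. \<bar>D v\<bar> \<le> K * c1norm v)
   \<and> (\<forall>e>0. \<exists>\<delta>>0. \<forall>v\<in>W b c. c1norm v < \<delta> \<longrightarrow>
          \<bar>F (\<lambda>p. u p + v p) - F u - D v\<bar> \<le> e * c1norm v)"

definition C1_on_W :: "real \<Rightarrow> real \<Rightarrow> ((real \<times> real \<Rightarrow> real^'d) \<Rightarrow> real) \<Rightarrow> bool" where
  "C1_on_W b c F \<longleftrightarrow>
     (\<exists>DF. (\<forall>u\<in>W b c. frechet_on_W b c F u (DF u))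
         \<and> (\<forall>u\<in>W b c. \<forall>e>0. \<exists>\<delta>>0. \<forall>w\<in>W b c. c1norm (\<lambda>p. w p - u p) < \<delta> \<longrightarrow>
               (\<forall>v\<in>W b c. \<bar>DF w v - DF u v\<bar> \<le> e * c1norm v)))"

definition stationary_on :: "(real \<times> real \<Rightarrow> real^'d) set \<Rightarrow> ((real \<times> real \<Rightarrow> real^'d) \<Rightarrow> real)
     \<Rightarrow> (real \<times> real \<Rightarrow> real^'d) \<Rightarrow> bool" where
  "stationary_on V F u \<longleftrightarrow> u \<in> V \<and>
     (\<forall>v\<in>V. ((\<lambda>\<epsilon>. F (\<lambda>p. u p + \<epsilon> *\<^sub>R v p)) has_real_derivative 0) (at 0))"

definition C1_per :: "real \<Rightarrow> (real \<Rightarrow> real^'d) set" where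
  "C1_per b = {f. (\<forall>\<xi>. f (\<xi> + b) = f \<xi>) \<and> (\<forall>\<xi>. f differentiable (at \<xi>))
                 \<and> continuous_on UNIV (\<lambda>\<xi>. vector_derivative f (at \<xi>))}"

end

theory Submission
  imports Defs
begin

text \<open>The action is invariant under the flow \<open>(t, x) \<mapsto> (t + s, x + c s)\<close>, which fixes every
  travelling wave \<open>u\<close>. Hence the derivative \<open>D\<close> of \<open>S\<close> at \<open>u\<close> takes the same value on a direction
  \<open>v\<close> and on all its translates along the flow, so also on their means over \<open>N\<close> equally spaced
  times in one period \<open>\<bar>b / c\<bar>\<close> of the flow. These Riemann means converge in \<open>C\<^sup>1\<close> to the average
  of \<open>v\<close> along the orbits of the flow, which is itself a travelling wave; boundedness of \<open>D\<close>
  therefore gives \<open>D v = D v\<^sub>a\<^sub>v\<^sub>g\<close>, and \<open>D v\<^sub>a\<^sub>v\<^sub>g = 0\<close> when \<open>u\<close> is stationary for \<open>S\<^sub>\<Sigma>\<close>.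
  The formula for \<open>S\<^sub>\<Sigma>\<close> follows by substituting \<open>u(t, x) = f(x - c t)\<close> and using that the
  integrand is \<open>b\<close>-periodic in \<open>x\<close>.\<close>

section \<open>Periodic functions of one variable\<close>

lemma periodic_add_of_int_mult:
  fixes P :: real
  assumes per: "\<And>y. g (y + P) = g y"
  shows "g (y + of_int k * P) = g y"
proof -
  have nat_mult: "g (y + of_nat n * P) = g y" for n :: nat and y
    by (induction n arbitrary: y) (auto simp: distrib_right per add.assoc[symmetric])
  show ?thesis
  proof (cases "k \<ge> 0")
    case True
    then show ?thesis using nat_mult[where n="nat k"] by simp
  next
    case False
    have "g (y + of_int k * P) = g (y + of_int k * P + of_nat (nat (- k)) * P)"
      using nat_mult by simp
    also have "y + of_int k * P + of_nat (nat (- k)) * P = y" using False by simp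
    finally show ?thesis .
  qed
qed

lemma integral_periodic_translate_le_period:
  fixes g :: "real \<Rightarrow> 'a::banach"
  assumes a: "0 \<le> a" "a \<le> P" and per: "\<And>y. g (y + P) = g y"
  shows "integral {a..a + P} g = integral {0..P} g"
proof -
  have gP: "g \<circ> (+) P = g" using per by (auto simp: add.commute)
  have shift: "integral {P..a + P} g = integral {0..a} g"
    using integral_shift_Icc_real[of 0 a g P] by (simp add: gP add.commute)
  have shift_integrable: "g integrable_on {P..a + P} \<longleftrightarrow> g integrable_on {0..a}"
    using integrable_on_shift_Icc_real[of g P 0 a] by (simp add: gP add.commute)
  show ?thesis
  proof (cases "g integrable_on {0..P}")
    case True
    have "g integrable_on {a..P}" "g integrable_on {0..a}"
      using a by (auto intro: integrable_subinterval_real[OF True])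
    then have "g integrable_on {a..a + P}"
      using Henstock_Kurzweil_Integration.integrable_combine[where a=a and c=P and b="a + P"]
        shift_integrable a by simp
    then have "integral {a..a + P} g = integral {a..P} g + integral {P..a + P} g"
      using Henstock_Kurzweil_Integration.integral_combine[where a=a and c=P and b="a + P" and f=g]
        a by simp
    also have "\<dots> = integral {0..P} g"
      using Henstock_Kurzweil_Integration.integral_combine[OF a True] shift
      by (simp add: add.commute)
    finally show ?thesis .
  next
    case False
    have "\<not> g integrable_on {a..a + P}"
    proof
      assume int: "g integrable_on {a..a + P}"
      have "g integrable_on {a..P}" "g integrable_on {P..a + P}"
        using a by (auto intro: integrable_subinterval_real[OF int])
      then have "g integrable_on {0..P}"
        using Henstock_Kurzweil_Integration.integrable_combine[OF a] shift_integrable by simp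
      then show False using False by simp
    qed
    then show ?thesis using False by (simp add: not_integrable_integral)
  qed
qed

lemma integral_periodic_translate:
  fixes g :: "real \<Rightarrow> 'a::banach"
  assumes P: "P > 0" and per: "\<And>y. g (y + P) = g y"
  shows "integral {a..a + P} g = integral {0..P} g"
proof -
  define k where "k = \<lfloor>a / P\<rfloor>"
  define a' where "a' = a - of_int k * P"
  have a': "0 \<le> a'" "a' \<le> P"
    using P floor_divide_lower[OF P, of a] floor_divide_upper[OF P, of a]
    unfolding a'_def k_def by (simp_all add: algebra_simps)
  have "g \<circ> (+) (of_int k * P) = g"
    using periodic_add_of_int_mult[of g P] per by (auto simp: add.commute)
  then have "integral {a..a + P} g = integral {a'..a' + P} g"
    using integral_shift_Icc_real[of a' "a' + P" g "of_int k * P"]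
    by (simp add: a'_def algebra_simps)
  also have "\<dots> = integral {0..P} g"
    using integral_periodic_translate_le_period[of a' P g] a' per by blast
  finally show ?thesis .
qed

lemma integral_periodic_shift:
  fixes g :: "real \<Rightarrow> 'a::banach"
  assumes "P > 0" and "\<And>y. g (y + P) = g y"
  shows "integral {0..P} (\<lambda>x. g (x + a)) = integral {0..P} g"
  using integral_shift_Icc_real[of 0 P g a] integral_periodic_translate[of P g a] assms
  by (simp add: o_def add.commute)

lemma oint_periodic_shift:
  assumes T: "T \<noteq> 0" and per: "\<And>y. I (y + T) = I y"
  shows "oint 0 T (\<lambda>t. I (t + s)) = oint 0 T I"
proof (cases "T > 0")
  case True
  then show ?thesis unfolding oint_def using integral_periodic_shift[of T I] True per by simp
next
  case False
  then have T': "- T > 0" using T by simp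
  have per': "I (y + - T) = I y" for y
    using periodic_add_of_int_mult[of I T y "- 1"] per by simp
  have "integral {T..0} (\<lambda>t. I (t + s)) = integral {s + T..s + T + - T} I"
    using integral_shift_Icc_real[of T 0 I s] by (simp add: o_def add.commute)
  also have "\<dots> = integral {T..T + - T} I"
    using integral_periodic_translate[of "- T" I] T' per' by metis
  finally show ?thesis unfolding oint_def using False by simp
qed

lemma oint_const: "oint 0 T (\<lambda>t. k) = T * k"
  unfolding oint_def by auto

section \<open>Functions on the torus\<close>

definition torus_periodic :: "real \<Rightarrow> real \<Rightarrow> (real \<times> real \<Rightarrow> 'a) \<Rightarrow> bool" where
  "torus_periodic b c w \<longleftrightarrow> (\<forall>t x. w (t + b / c, x) = w (t, x) \<and> w (t, x + b) = w (t, x))"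

lemma mem_W_iff:
  "u \<in> W b c \<longleftrightarrow> torus_periodic b c u \<and> (\<forall>p. u differentiable (at p))
     \<and> continuous_on UNIV (pd_t u) \<and> continuous_on UNIV (pd_x u)"
  unfolding W_def torus_periodic_def by auto

lemma torus_periodic_lattice:
  assumes "torus_periodic b c w"
  shows "w (p + (of_int k * (b / c), of_int j * b)) = w p"
proof -
  obtain t x where p: "p = (t, x)" by fastforce
  have "w (y + of_int k * (b / c), x') = w (y, x')" for y x'
    using periodic_add_of_int_mult[of "\<lambda>y. w (y, x')" "b / c" y k] assms
    unfolding torus_periodic_def by auto
  moreover have "w (t', y + of_int j * b) = w (t', y)" for y t'
    using periodic_add_of_int_mult[of "\<lambda>y. w (t', y)" b y j] assms
    unfolding torus_periodic_def by auto
  ultimately show ?thesis using p by simp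
qed

lemma torus_periodic_lattice_abs:
  assumes "torus_periodic b c w"
  shows "w (p + (of_int k * \<bar>b / c\<bar>, of_int j * b)) = w p"
proof (cases "b / c \<ge> 0")
  case True
  show ?thesis using torus_periodic_lattice[OF assms, of p k j] unfolding abs_of_nonneg[OF True] .
next
  case False
  show ?thesis
    using torus_periodic_lattice[OF assms, of p "- k" j]
    unfolding abs_of_neg[OF not_le_imp_less[OF False]] by simp
qed

lemma torus_periodic_orbit:
  assumes "torus_periodic b c w" and "c \<noteq> 0"
  shows "w (p + (\<bar>b / c\<bar>, c * \<bar>b / c\<bar>)) = w p"
proof (cases "b / c \<ge> 0")
  case True
  show ?thesis
    using torus_periodic_lattice[OF assms(1), of p 1 1] assms(2)
    unfolding abs_of_nonneg[OF True] by simp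
next
  case False
  show ?thesis using torus_periodic_lattice[OF assms(1), of p "- 1" "- 1"] assms(2)
    unfolding abs_of_neg[OF not_le_imp_less[OF False]] by simp
qed

lemma torus_periodic_translate:
  assumes "torus_periodic b c w"
  shows "torus_periodic b c (\<lambda>q. w (q + a))"
proof -
  obtain a1 a2 where a: "a = (a1, a2)" by fastforce
  have "w (t + b / c + a1, x + a2) = w (t + a1, x + a2)"
    and "w (t + a1, x + b + a2) = w (t + a1, x + a2)" for t x
    using assms unfolding torus_periodic_def by (metis add.commute add.left_commute)+
  then show ?thesis unfolding torus_periodic_def a by simp
qed

lemma torus_fundamental_domain:
  assumes "c \<noteq> 0" "b > 0"
  obtains a where "p + a \<in> cbox (0, 0) (\<bar>b / c\<bar>, b)"
    and "\<And>w q. torus_periodic b c w \<Longrightarrow> w (q + a) = w q"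
proof -
  define P where "P = \<bar>b / c\<bar>"
  have P: "P > 0" using assms by (simp add: P_def)
  obtain t x where p: "p = (t, x)" by fastforce
  define a where "a = (of_int (- \<lfloor>t / P\<rfloor>) * P, of_int (- \<lfloor>x / b\<rfloor>) * b)"
  have "p + a \<in> cbox (0, 0) (P, b)"
    using floor_divide_lower[OF P, of t] floor_divide_upper[OF P, of t]
      floor_divide_lower[OF assms(2), of x] floor_divide_upper[OF assms(2), of x]
    unfolding p a_def by (simp add: cbox_Pair_eq algebra_simps)
  moreover have "w (q + a) = w q" if "torus_periodic b c w" for w :: "real \<times> real \<Rightarrow> 'a" and q
    using torus_periodic_lattice_abs[OF that] unfolding a_def P_def by blast
  ultimately show ?thesis using that unfolding P_def by blast
qed

lemma torus_periodic_bounded: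
  fixes w :: "real \<times> real \<Rightarrow> 'a::real_normed_vector"
  assumes "torus_periodic b c w" "continuous_on UNIV w" "c \<noteq> 0" "b > 0"
  shows "bounded (range w)"
proof -
  have "compact (w ` cbox (0, 0) (\<bar>b / c\<bar>, b))"
    using assms by (intro compact_continuous_image) (auto intro: continuous_on_subset)
  moreover have "range w \<subseteq> w ` cbox (0, 0) (\<bar>b / c\<bar>, b)"
  proof
    fix y assume "y \<in> range w"
    then obtain p where y: "y = w p" by blast
    obtain a where "p + a \<in> cbox (0, 0) (\<bar>b / c\<bar>, b)" "w (p + a) = w p"
      using torus_fundamental_domain[OF assms(3,4), of p] assms(1) by metis
    then show "y \<in> w ` cbox (0, 0) (\<bar>b / c\<bar>, b)" using y by (metis image_eqI)
  qed
  ultimately show ?thesis by (meson bounded_subset compact_imp_bounded)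
qed

lemma torus_periodic_uniformly_continuous:
  fixes w :: "real \<times> real \<Rightarrow> 'a::real_normed_vector"
  assumes "torus_periodic b c w" "continuous_on UNIV w" "c \<noteq> 0" "b > 0"
  shows "uniformly_continuous_on UNIV w"
  unfolding uniformly_continuous_on_def
proof (intro allI impI)
  fix e :: real assume "e > 0"
  define Q where "Q = cbox (- 1, - 1) (\<bar>b / c\<bar> + 1, b + 1)"
  have "uniformly_continuous_on Q w"
    using assms unfolding Q_def
    by (intro compact_uniformly_continuous) (auto intro: continuous_on_subset)
  then obtain d where d: "d > 0" "\<And>p q. p \<in> Q \<Longrightarrow> q \<in> Q \<Longrightarrow> dist q p < d \<Longrightarrow> dist (w q) (w p) < e"
    using uniformly_continuous_onE[OF _ \<open>e > 0\<close>] by blast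
  have "dist (w q) (w p) < e" if pq: "dist q p < min d 1" for p q
  proof -
    obtain a where a: "p + a \<in> cbox (0, 0) (\<bar>b / c\<bar>, b)" "\<And>q. w (q + a) = w q"
      using torus_fundamental_domain[OF assms(3,4), of p] assms(1) by metis
    have dist_a: "dist (q + a) (p + a) < min d 1" using pq by (simp add: dist_norm)
    then have "dist (fst (q + a)) (fst (p + a)) < 1" "dist (snd (q + a)) (snd (p + a)) < 1"
      using dist_fst_le[of "q + a" "p + a"] dist_snd_le[of "q + a" "p + a"] by linarith+
    then have "q + a \<in> Q" "p + a \<in> Q" using a(1) unfolding Q_def
      by (cases "p + a", cases "q + a", auto simp: cbox_Pair_eq dist_real_def)+
    then have "dist (w (q + a)) (w (p + a)) < e" using d(2) dist_a by simp
    then show ?thesis using a(2) by simp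
  qed
  then show "\<exists>d>0. \<forall>p\<in>UNIV. \<forall>q\<in>UNIV. dist q p < d \<longrightarrow> dist (w q) (w p) < e"
    using d(1) by (intro exI[of _ "min d 1"]) auto
qed

section \<open>Partial derivatives and the space W\<close>

lemma pd_eq_has_derivative:
  assumes "(u has_derivative u') (at p)"
  shows "pd_t u p = u' (1, 0)" and "pd_x u p = u' (0, 1)"
  unfolding pd_t_def pd_x_def frechet_derivative_at[OF assms, symmetric] by simp_all

lemma pd_translate:
  assumes "h differentiable (at (p + a))"
  shows "pd_t (\<lambda>q. h (q + a)) p = pd_t h (p + a)" and "pd_x (\<lambda>q. h (q + a)) p = pd_x h (p + a)"
proof -
  have "((\<lambda>q. q + a) has_derivative (\<lambda>q. q)) (at p)"
    by (auto intro!: derivative_eq_intros)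
  from diff_chain_at[OF this assms[unfolded frechet_derivative_works]]
  have "((\<lambda>q. h (q + a)) has_derivative frechet_derivative h (at (p + a))) (at p)"
    by (simp add: o_def)
  from pd_eq_has_derivative[OF this]
  show "pd_t (\<lambda>q. h (q + a)) p = pd_t h (p + a)" and "pd_x (\<lambda>q. h (q + a)) p = pd_x h (p + a)"
    unfolding pd_t_def pd_x_def .
qed

lemma pd_add_scaleR:
  assumes "u differentiable (at p)" "v differentiable (at p)"
  shows "pd_t (\<lambda>q. u q + r *\<^sub>R v q) p = pd_t u p + r *\<^sub>R pd_t v p"
    and "pd_x (\<lambda>q. u q + r *\<^sub>R v q) p = pd_x u p + r *\<^sub>R pd_x v p"
proof -
  have "((\<lambda>q. u q + r *\<^sub>R v q) has_derivative
      (\<lambda>h. frechet_derivative u (at p) h + r *\<^sub>R frechet_derivative v (at p) h)) (at p)"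
    using assms[unfolded frechet_derivative_works] by (auto intro!: derivative_eq_intros)
  from pd_eq_has_derivative[OF this]
  show "pd_t (\<lambda>q. u q + r *\<^sub>R v q) p = pd_t u p + r *\<^sub>R pd_t v p"
    and "pd_x (\<lambda>q. u q + r *\<^sub>R v q) p = pd_x u p + r *\<^sub>R pd_x v p"
    unfolding pd_t_def pd_x_def .
qed

lemma pd_scaleR:
  assumes "v differentiable (at p)"
  shows "pd_t (\<lambda>q. r *\<^sub>R v q) p = r *\<^sub>R pd_t v p" and "pd_x (\<lambda>q. r *\<^sub>R v q) p = r *\<^sub>R pd_x v p"
  using pd_add_scaleR[where u="\<lambda>q. 0", OF _ assms] by (simp_all add: pd_t_def pd_x_def)

lemma pd_sum:
  assumes "finite K" "\<And>k. k \<in> K \<Longrightarrow> f k differentiable (at p)"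
  shows "pd_t (\<lambda>q. \<Sum>k\<in>K. f k q) p = (\<Sum>k\<in>K. pd_t (f k) p)"
    and "pd_x (\<lambda>q. \<Sum>k\<in>K. f k q) p = (\<Sum>k\<in>K. pd_x (f k) p)"
proof -
  have "((\<lambda>q. \<Sum>k\<in>K. f k q) has_derivative (\<lambda>h. \<Sum>k\<in>K. frechet_derivative (f k) (at p) h)) (at p)"
    using assms frechet_derivative_works by (auto intro!: derivative_eq_intros)
  from pd_eq_has_derivative[OF this]
  show "pd_t (\<lambda>q. \<Sum>k\<in>K. f k q) p = (\<Sum>k\<in>K. pd_t (f k) p)"
    and "pd_x (\<lambda>q. \<Sum>k\<in>K. f k q) p = (\<Sum>k\<in>K. pd_x (f k) p)"
    unfolding pd_t_def pd_x_def .
qed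

lemma W_zero: "(\<lambda>q. 0) \<in> W b c"
  unfolding W_def pd_t_def pd_x_def by auto

lemma W_continuous: "u \<in> W b c \<Longrightarrow> continuous_on UNIV u"
  unfolding mem_W_iff
  by (meson continuous_at_imp_continuous_on differentiable_imp_continuous_within)

lemma W_pd_torus_periodic:
  assumes "u \<in> W b c"
  shows "torus_periodic b c (pd_t u)" and "torus_periodic b c (pd_x u)"
proof -
  have diff: "\<And>p. u differentiable (at p)" and per: "torus_periodic b c u"
    using assms unfolding mem_W_iff by blast+
  have "(\<lambda>q. u (q + (b / c, 0))) = u" "(\<lambda>q. u (q + (0, b))) = u"
    using per unfolding torus_periodic_def by auto
  then have "pd_t u (p + (b / c, 0)) = pd_t u p" "pd_t u (p + (0, b)) = pd_t u p"
       "pd_x u (p + (b / c, 0)) = pd_x u p" "pd_x u (p + (0, b)) = pd_x u p" for p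
    using pd_translate[of u p "(b / c, 0)"] pd_translate[of u p "(0, b)"] diff by metis+
  then show "torus_periodic b c (pd_t u)" "torus_periodic b c (pd_x u)"
    unfolding torus_periodic_def by auto
qed

lemma W_translate:
  assumes "u \<in> W b c"
  shows "(\<lambda>q. u (q + a)) \<in> W b c"
proof -
  have diff: "\<And>p. u differentiable (at p)" using assms unfolding mem_W_iff by blast
  have "(\<lambda>q. u (q + a)) differentiable (at p)" for p
    using differentiable_chain_at[of "\<lambda>q. q + a" p u] diff by (simp add: o_def)
  moreover have "pd_t (\<lambda>q. u (q + a)) = pd_t u \<circ> (\<lambda>p. p + a)"
    and "pd_x (\<lambda>q. u (q + a)) = pd_x u \<circ> (\<lambda>p. p + a)"
    by (simp_all add: fun_eq_iff pd_translate diff)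
  moreover have "continuous_on UNIV (\<lambda>p::real \<times> real. p + a)" by (intro continuous_intros)
  ultimately show ?thesis
    using assms torus_periodic_translate continuous_on_compose
    unfolding mem_W_iff by (metis continuous_on_subset subset_UNIV)
qed

lemma W_add_scaleR:
  assumes "u \<in> W b c" "v \<in> W b c"
  shows "(\<lambda>q. u q + r *\<^sub>R v q) \<in> W b c"
proof -
  have du: "\<And>p. u differentiable (at p)" and dv: "\<And>p. v differentiable (at p)"
    using assms unfolding mem_W_iff by blast+
  have "pd_t (\<lambda>q. u q + r *\<^sub>R v q) = (\<lambda>p. pd_t u p + r *\<^sub>R pd_t v p)"
    and "pd_x (\<lambda>q. u q + r *\<^sub>R v q) = (\<lambda>p. pd_x u p + r *\<^sub>R pd_x v p)"
    using pd_add_scaleR du dv by blast+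
  moreover have "(\<lambda>q. u q + r *\<^sub>R v q) differentiable (at p)" for p
    by (simp add: du dv)
  ultimately show ?thesis
    using assms unfolding mem_W_iff torus_periodic_def
    by (simp add: continuous_on_add continuous_on_scaleR)
qed

lemma W_scaleR: "v \<in> W b c \<Longrightarrow> (\<lambda>q. r *\<^sub>R v q) \<in> W b c"
  using W_add_scaleR[OF W_zero] by simp

lemma W_sum:
  assumes "finite K" "\<And>k. k \<in> K \<Longrightarrow> f k \<in> W b c"
  shows "(\<lambda>q. \<Sum>k\<in>K. f k q) \<in> W b c"
  using assms
proof (induction K rule: finite_induct)
  case empty
  then show ?case using W_zero by simp
next
  case (insert k K)
  then show ?case using W_add_scaleR[of "f k" b c "\<lambda>q. \<Sum>k\<in>K. f k q" 1] by simp
qed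

lemma W_bounded:
  assumes v: "v \<in> W b c" and cb: "c \<noteq> 0" "b > 0"
  obtains M where "\<And>p. norm (v p) \<le> M" "\<And>p. norm (pd_t v p) \<le> M" "\<And>p. norm (pd_x v p) \<le> M"
proof -
  have per: "torus_periodic b c v" "torus_periodic b c (pd_t v)" "torus_periodic b c (pd_x v)"
    and cont: "continuous_on UNIV (pd_t v)" "continuous_on UNIV (pd_x v)"
    using v W_pd_torus_periodic[OF v] unfolding mem_W_iff by blast+
  have "bounded (range v \<union> range (pd_t v) \<union> range (pd_x v))"
    using torus_periodic_bounded[OF per(1) W_continuous[OF v] cb]
      torus_periodic_bounded[OF per(2) cont(1) cb] torus_periodic_bounded[OF per(3) cont(2) cb]
    by simp
  then obtain M where "\<forall>y \<in> range v \<union> range (pd_t v) \<union> range (pd_x v). norm y \<le> M"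
    unfolding bounded_iff by blast
  then show ?thesis using that by blast
qed

lemma c1norm_bounded:
  assumes "\<And>p. norm (w p) \<le> A" "\<And>p. norm (pd_t w p) \<le> B" "\<And>p. norm (pd_x w p) \<le> C"
  shows "0 \<le> c1norm w" and "c1norm w \<le> A + B + C"
proof -
  have bdd: "bdd_above (range (\<lambda>p. norm (w p)))" "bdd_above (range (\<lambda>p. norm (pd_t w p)))"
    "bdd_above (range (\<lambda>p. norm (pd_x w p)))"
    using assms by (meson bdd_aboveI2)+
  have "0 \<le> (SUP p. norm (w p))" "0 \<le> (SUP p. norm (pd_t w p))" "0 \<le> (SUP p. norm (pd_x w p))"
    using cSUP_upper[OF UNIV_I bdd(1)] cSUP_upper[OF UNIV_I bdd(2)] cSUP_upper[OF UNIV_I bdd(3)]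
    by (meson norm_ge_zero order_trans)+
  then show "0 \<le> c1norm w" unfolding c1norm_def by linarith
  have "(SUP p. norm (w p)) \<le> A" "(SUP p. norm (pd_t w p)) \<le> B" "(SUP p. norm (pd_x w p)) \<le> C"
    using assms by (auto intro!: cSUP_least)
  then show "c1norm w \<le> A + B + C" unfolding c1norm_def by linarith
qed

lemma W_c1norm_nonneg:
  assumes "w \<in> W b c" "c \<noteq> 0" "b > 0"
  shows "0 \<le> c1norm w"
proof -
  obtain M where "\<And>p. norm (w p) \<le> M" "\<And>p. norm (pd_t w p) \<le> M" "\<And>p. norm (pd_x w p) \<le> M"
    using W_bounded[OF assms] by blast
  then show ?thesis by (rule c1norm_bounded(1))
qed

section \<open>Derivatives of functionals on W\<close>

lemma frechet_on_W_add:
  assumes "frechet_on_W b c S u D" "v \<in> W b c" "w \<in> W b c"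
  shows "D (\<lambda>p. v p + w p) = D v + D w"
  using assms unfolding frechet_on_W_def by blast

lemma frechet_on_W_scaleR:
  assumes "frechet_on_W b c S u D" "v \<in> W b c"
  shows "D (\<lambda>p. r *\<^sub>R v p) = r * D v"
  using assms unfolding frechet_on_W_def by blast

lemma W_c1norm_scaleR_le:
  assumes v: "v \<in> W b c" and "c \<noteq> 0" "b > 0"
  obtains M where "M > 0" "\<And>\<epsilon>. c1norm (\<lambda>p. \<epsilon> *\<^sub>R v p) \<le> \<bar>\<epsilon>\<bar> * M"
proof -
  obtain M0 where M0: "\<And>p. norm (v p) \<le> M0" "\<And>p. norm (pd_t v p) \<le> M0" "\<And>p. norm (pd_x v p) \<le> M0"
    using W_bounded[OF assms] by blast
  have diff: "\<And>p. v differentiable (at p)" using v unfolding mem_W_iff by blast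
  have "c1norm (\<lambda>p. \<epsilon> *\<^sub>R v p) \<le> \<bar>\<epsilon>\<bar> * (3 * max M0 0 + 1)" for \<epsilon>
  proof -
    have "norm (\<epsilon> *\<^sub>R w) \<le> \<bar>\<epsilon>\<bar> * max M0 0" if "norm w \<le> M0" for w :: "real^'a"
      using that by (auto intro: mult_left_mono max.coboundedI1)
    then have "c1norm (\<lambda>p. \<epsilon> *\<^sub>R v p) \<le> \<bar>\<epsilon>\<bar> * max M0 0 + \<bar>\<epsilon>\<bar> * max M0 0 + \<bar>\<epsilon>\<bar> * max M0 0"
      using M0 by (intro c1norm_bounded(2)) (simp_all only: pd_scaleR[OF diff])
    then show ?thesis by (simp add: algebra_simps)
  qed
  then show ?thesis using that[of "3 * max M0 0 + 1"] by simp
qed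

lemma frechet_on_W_directional_derivative:
  assumes F: "frechet_on_W b c S u D" and v: "v \<in> W b c" and "c \<noteq> 0" "b > 0"
  shows "((\<lambda>\<epsilon>. S (\<lambda>p. u p + \<epsilon> *\<^sub>R v p)) has_real_derivative D v) (at 0)"
proof -
  obtain M where M: "M > 0" and c1norm_scaleR: "\<And>\<epsilon>. c1norm (\<lambda>p. \<epsilon> *\<^sub>R v p) \<le> \<bar>\<epsilon>\<bar> * M"
    using W_c1norm_scaleR_le[OF v assms(3,4)] by blast
  have "((\<lambda>\<epsilon>. S (\<lambda>p. u p + \<epsilon> *\<^sub>R v p)) has_derivative (\<lambda>\<epsilon>. D v * \<epsilon>)) (at 0)"
    unfolding has_derivative_at_alt
  proof (intro conjI allI impI)
    show "bounded_linear (\<lambda>\<epsilon>. D v * \<epsilon>)" by (rule bounded_linear_mult_right)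
    fix e :: real assume "e > 0"
    then obtain \<delta> where \<delta>: "\<delta> > 0" "\<And>w. w \<in> W b c \<Longrightarrow> c1norm w < \<delta> \<Longrightarrow>
        \<bar>S (\<lambda>p. u p + w p) - S u - D w\<bar> \<le> e / M * c1norm w"
      using F M unfolding frechet_on_W_def by (metis divide_pos_pos)
    have "\<bar>S (\<lambda>p. u p + \<epsilon> *\<^sub>R v p) - S u - \<epsilon> * D v\<bar> \<le> e * \<bar>\<epsilon>\<bar>" if "\<bar>\<epsilon>\<bar> < \<delta> / M" for \<epsilon>
    proof -
      have "c1norm (\<lambda>p. \<epsilon> *\<^sub>R v p) < \<delta>"
        using c1norm_scaleR[of \<epsilon>] that M by (simp add: field_simps)
      then have "\<bar>S (\<lambda>p. u p + \<epsilon> *\<^sub>R v p) - S u - \<epsilon> * D v\<bar> \<le> e / M * c1norm (\<lambda>p. \<epsilon> *\<^sub>R v p)"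
        using \<delta>(2)[OF W_scaleR[OF v]] frechet_on_W_scaleR[OF F v] by simp
      also have "\<dots> \<le> e / M * (\<bar>\<epsilon>\<bar> * M)"
        using c1norm_scaleR \<open>e > 0\<close> M by (intro mult_left_mono) auto
      finally show ?thesis using M by simp
    qed
    then show "\<exists>d>0. \<forall>\<epsilon>. norm (\<epsilon> - 0) < d \<longrightarrow>
        norm (S (\<lambda>p. u p + \<epsilon> *\<^sub>R v p) - S (\<lambda>p. u p + 0 *\<^sub>R v p) - D v * (\<epsilon> - 0))
          \<le> e * norm (\<epsilon> - 0)"
      using \<delta>(1) M by (intro exI[of _ "\<delta> / M"]) (simp add: mult.commute)
  qed
  then show ?thesis by (simp add: has_field_derivative_def)
qed

lemma frechet_on_W_sum:
  assumes F: "frechet_on_W b c S u D" and "finite K" and "\<And>k. k \<in> K \<Longrightarrow> f k \<in> W b c"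
  shows "D (\<lambda>q. \<Sum>k\<in>K. f k q) = (\<Sum>k\<in>K. D (f k))"
  using assms(2,3)
proof (induction K rule: finite_induct)
  case empty
  then show ?case using frechet_on_W_scaleR[OF F W_zero, of 0] by simp
next
  case (insert k K)
  then show ?case using frechet_on_W_add[OF F _ W_sum[of K f]] by simp
qed

lemma action_translate_orbit:
  assumes h: "h \<in> W b c" and "c \<noteq> 0" "b > 0"
  shows "action b c L (\<lambda>q. h (q + (s, c * s))) = action b c L h"
proof -
  define Lh where "Lh = (\<lambda>p. L (h p, pd_t h p, pd_x h p))"
  have diff: "\<And>p. h differentiable (at p)" using h unfolding mem_W_iff by blast
  have per: "torus_periodic b c Lh"
    using h W_pd_torus_periodic[OF h] unfolding mem_W_iff torus_periodic_def Lh_def by simp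
  define I where "I = (\<lambda>t. integral {0..b} (\<lambda>x. Lh (t, x)))"
  have "oint 0 b (\<lambda>x. Lh (t + s, x + c * s)) = I (t + s)" for t
    using integral_periodic_shift[of b "\<lambda>x. Lh (t + s, x)" "c * s"] per assms
    unfolding oint_def I_def torus_periodic_def by simp
  then have "action b c L (\<lambda>q. h (q + (s, c * s))) = oint 0 (b / c) (\<lambda>t. I (t + s))"
    unfolding action_def Lh_def by (simp add: pd_translate diff)
  also have "\<dots> = oint 0 (b / c) I"
    using oint_periodic_shift[of "b / c" I] per assms unfolding I_def torus_periodic_def by simp
  also have "\<dots> = action b c L h"
    unfolding action_def I_def Lh_def oint_def using assms by simp
  finally show ?thesis .
qed

lemma frechet_on_W_translate_orbit:
  assumes F: "frechet_on_W b c (action b c L) u D" and u: "u \<in> Sigma_tw b c" and v: "v \<in> W b c"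
    and cb: "c \<noteq> 0" "b > 0"
  shows "D (\<lambda>q. v (q + (s, c * s))) = D v"
proof -
  have uW: "u \<in> W b c" and u_inv: "\<And>q. u (q + (s, c * s)) = u q"
    using u unfolding Sigma_tw_def by (auto simp: case_prod_unfold)
  have "action b c L (\<lambda>p. u p + \<epsilon> *\<^sub>R v (p + (s, c * s))) = action b c L (\<lambda>p. u p + \<epsilon> *\<^sub>R v p)" for \<epsilon>
    using action_translate_orbit[OF W_add_scaleR[OF uW v, of \<epsilon>] cb, of L s] by (simp only: u_inv)
  then have "((\<lambda>\<epsilon>. action b c L (\<lambda>p. u p + \<epsilon> *\<^sub>R v p))
      has_real_derivative D (\<lambda>q. v (q + (s, c * s)))) (at 0)"
    using frechet_on_W_directional_derivative[OF F W_translate[OF v, of "(s, c * s)"] cb] by simp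
  then show ?thesis
    using frechet_on_W_directional_derivative[OF F v cb] by (rule DERIV_unique)
qed

section \<open>Travelling waves\<close>

lemma vector_derivative_periodic:
  fixes f :: "real \<Rightarrow> 'a::real_normed_vector"
  assumes per: "\<And>y. f (y + b) = f y" and diff: "f differentiable (at (\<xi> + b))"
  shows "vector_derivative f (at (\<xi> + b)) = vector_derivative f (at \<xi>)"
proof -
  have "((\<lambda>y. y + b) has_vector_derivative 1) (at \<xi>)"
    unfolding has_vector_derivative_def by (auto intro!: derivative_eq_intros)
  from vector_diff_chain_at[OF this diff[unfolded vector_derivative_works]]
  have "(f has_vector_derivative vector_derivative f (at (\<xi> + b))) (at \<xi>)"
    using per by (simp add: o_def)
  then show ?thesis by (rule vector_derivative_at[symmetric])
qed

lemma travelling_wave_has_derivative: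
  fixes f :: "real \<Rightarrow> 'a::real_normed_vector"
  assumes "f differentiable (at (x - c * t))"
  shows "((\<lambda>(t, x). f (x - c * t)) has_derivative
          (\<lambda>h. (snd h - c * fst h) *\<^sub>R vector_derivative f (at (x - c * t)))) (at (t, x))"
proof -
  have lin: "((\<lambda>p. snd p - c * fst p) has_derivative (\<lambda>p. snd p - c * fst p)) (at (t, x))"
    by (auto intro!: derivative_eq_intros)
  have "(f has_derivative (\<lambda>h. h *\<^sub>R vector_derivative f (at (x - c * t))))
      (at (snd (t, x) - c * fst (t, x)))"
    using assms unfolding vector_derivative_works has_vector_derivative_def by simp
  from diff_chain_at[OF lin this] show ?thesis by (simp add: o_def case_prod_unfold)
qed

lemma travelling_wave_pd:
  fixes f :: "real \<Rightarrow> 'a::real_normed_vector"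
  assumes "f differentiable (at (x - c * t))"
  shows "pd_t (\<lambda>(t, x). f (x - c * t)) (t, x) = - c *\<^sub>R vector_derivative f (at (x - c * t))"
    and "pd_x (\<lambda>(t, x). f (x - c * t)) (t, x) = vector_derivative f (at (x - c * t))"
  using pd_eq_has_derivative[OF travelling_wave_has_derivative[OF assms]] by simp_all

lemma travelling_wave_in_Sigma_tw:
  fixes f :: "real \<Rightarrow> real^'d"
  assumes f: "f \<in> C1_per b" and "c \<noteq> 0"
  shows "(\<lambda>(t, x). f (x - c * t)) \<in> Sigma_tw b c"
proof -
  have per: "\<And>y. f (y + b) = f y" and diff: "\<And>y. f differentiable (at y)"
    and cont: "continuous_on UNIV (\<lambda>\<xi>. vector_derivative f (at \<xi>))"
    using f unfolding C1_per_def by auto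
  let ?u = "\<lambda>(t, x). f (x - c * t)"
  have "continuous_on UNIV (\<lambda>p::real \<times> real. vector_derivative f (at (snd p - c * fst p)))"
    by (rule continuous_on_compose2[OF cont]) (intro continuous_intros, simp)
  moreover have "pd_t ?u = (\<lambda>p. - c *\<^sub>R vector_derivative f (at (snd p - c * fst p)))"
    and "pd_x ?u = (\<lambda>p. vector_derivative f (at (snd p - c * fst p)))"
    using travelling_wave_pd[OF diff] by (auto simp: fun_eq_iff)
  ultimately have "continuous_on UNIV (pd_t ?u)" "continuous_on UNIV (pd_x ?u)"
    by (simp_all add: continuous_on_minus continuous_on_scaleR)
  moreover have "?u differentiable (at p)" for p
    using travelling_wave_has_derivative[OF diff, where t="fst p" and x="snd p"]
    by (auto simp: case_prod_unfold intro: differentiableI)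
  moreover have "torus_periodic b c ?u"
  proof -
    have "f (x - c * (t + b / c)) = f (x - c * t)" for t x
      using per[of "x - c * (t + b / c)"] assms(2) by (simp add: algebra_simps)
    moreover have "f (x + b - c * t) = f (x - c * t)" for t x
      using per[of "x - c * t"] by (simp add: algebra_simps)
    ultimately show ?thesis unfolding torus_periodic_def by simp
  qed
  ultimately have "?u \<in> W b c" unfolding mem_W_iff by blast
  moreover have "?u (t + s, x + c * s) = ?u (t, x)" for s t x
    by (simp add: algebra_simps)
  ultimately show ?thesis unfolding Sigma_tw_def by blast
qed

lemma action_travelling_wave:
  fixes f :: "real \<Rightarrow> real^'d"
  assumes f: "f \<in> C1_per b" and "c \<noteq> 0" "b > 0"
  shows "action b c L (\<lambda>(t, x). f (x - c * t))
      = (b / c) * integral {0..b}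
          (\<lambda>\<xi>. L (f \<xi>, - c *\<^sub>R vector_derivative f (at \<xi>), vector_derivative f (at \<xi>)))"
proof -
  have per: "\<And>y. f (y + b) = f y" and diff: "\<And>y. f differentiable (at y)"
    using f unfolding C1_per_def by auto
  define g where
    "g \<xi> = L (f \<xi>, - c *\<^sub>R vector_derivative f (at \<xi>), vector_derivative f (at \<xi>))" for \<xi>
  have "g (y + b) = g y" for y
    unfolding g_def using per vector_derivative_periodic[OF per diff] by simp
  then have "oint 0 b (\<lambda>x. g (x + - c * t)) = integral {0..b} g" for t
    unfolding oint_def using integral_periodic_shift[of b g "- c * t"] assms by simp
  then have "action b c L (\<lambda>(t, x). f (x - c * t)) = oint 0 (b / c) (\<lambda>t. integral {0..b} g)"
    unfolding action_def g_def by (simp add: travelling_wave_pd[OF diff])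
  then show ?thesis unfolding g_def by (simp add: oint_const)
qed

lemma Sigma_tw_travelling_wave:
  fixes u :: "real \<times> real \<Rightarrow> real^'d"
  assumes u: "u \<in> Sigma_tw b c"
  obtains f where "f \<in> C1_per b" and "u = (\<lambda>(t, x). f (x - c * t))"
proof -
  have uW: "u \<in> W b c" and inv: "\<And>s t x. u (t + s, x + c * s) = u (t, x)"
    using u unfolding Sigma_tw_def by auto
  define f where "f \<xi> = u (0, \<xi>)" for \<xi>
  have "u (t, x) = f (x - c * t)" for t x
    using inv[of 0 t "x - c * t"] unfolding f_def by simp
  then have u_eq: "u = (\<lambda>(t, x). f (x - c * t))" by auto
  have vd: "(f has_vector_derivative pd_x u (0, \<xi>)) (at \<xi>)" for \<xi>
  proof -
    have "((\<lambda>y. (0::real, y)) has_vector_derivative (0, 1)) (at \<xi>)"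
      unfolding has_vector_derivative_def by (auto intro!: derivative_eq_intros)
    moreover have "(u has_derivative frechet_derivative u (at (0, \<xi>)))
        (at (0, \<xi>) within range (\<lambda>y. (0, y)))"
      using uW unfolding mem_W_iff
      by (auto intro: has_derivative_at_withinI simp: frechet_derivative_works)
    ultimately have "((u \<circ> (\<lambda>y. (0, y))) has_vector_derivative
        frechet_derivative u (at (0, \<xi>)) (0, 1)) (at \<xi>)"
      by (rule vector_derivative_diff_chain_within)
    then show ?thesis unfolding f_def pd_x_def by (simp add: o_def)
  qed
  have "continuous_on UNIV (pd_x u)" using uW unfolding mem_W_iff by blast
  then have "continuous_on UNIV (\<lambda>\<xi>. pd_x u (0, \<xi>))"
    by (rule continuous_on_compose2[OF _ _ subset_UNIV]) (intro continuous_intros)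
  moreover have "vector_derivative f (at \<xi>) = pd_x u (0, \<xi>)" for \<xi>
    using vd by (rule vector_derivative_at)
  moreover have "f differentiable (at \<xi>)" for \<xi>
    using vd by (rule differentiableI_vector)
  moreover have "f (\<xi> + b) = f \<xi>" for \<xi>
    using uW unfolding mem_W_iff torus_periodic_def f_def by simp
  ultimately have "f \<in> C1_per b" unfolding C1_per_def by simp
  then show ?thesis using u_eq that by blast
qed

section \<open>Averaging along the flow\<close>

lemma integral_left_Riemann_sum_error:
  fixes \<phi> :: "real \<Rightarrow> 'a::banach"
  assumes cont: "continuous_on UNIV \<phi>" and "h \<ge> 0"
    and osc: "\<And>s t. \<bar>s - t\<bar> \<le> h \<Longrightarrow> norm (\<phi> s - \<phi> t) \<le> e"
  shows "norm (integral {0..real N * h} \<phi> - h *\<^sub>R (\<Sum>k<N. \<phi> (real k * h))) \<le> e * (real N * h)"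
proof (induction N)
  case 0
  then show ?case by simp
next
  case (Suc N)
  define a where "a = real N * h"
  have a: "a \<ge> 0" "real (Suc N) * h = a + h"
    using \<open>h \<ge> 0\<close> unfolding a_def by (simp_all add: algebra_simps)
  have int: "\<phi> integrable_on {a..a + h}" "\<phi> integrable_on {0..a + h}"
    by (auto intro!: integrable_continuous_interval continuous_on_subset[OF cont])
  have "norm (integral {a..a + h} (\<lambda>s. \<phi> s - \<phi> a)) \<le> e * (a + h - a)"
    using \<open>h \<ge> 0\<close> osc by (intro integral_bound continuous_on_subset[OF cont] continuous_intros) auto
  moreover have "integral {a..a + h} (\<lambda>s. \<phi> s - \<phi> a) = integral {a..a + h} \<phi> - h *\<^sub>R \<phi> a"
    using int(1) \<open>h \<ge> 0\<close> by (subst integral_diff) auto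
  ultimately have last: "norm (integral {a..a + h} \<phi> - h *\<^sub>R \<phi> a) \<le> e * h" by simp
  have "integral {0..a + h} \<phi> = integral {0..a} \<phi> + integral {a..a + h} \<phi>"
    using Henstock_Kurzweil_Integration.integral_combine[OF a(1) _ int(2)] \<open>h \<ge> 0\<close> by simp
  then have "integral {0..real (Suc N) * h} \<phi> - h *\<^sub>R (\<Sum>k<Suc N. \<phi> (real k * h))
      = (integral {0..real N * h} \<phi> - h *\<^sub>R (\<Sum>k<N. \<phi> (real k * h)))
        + (integral {a..a + h} \<phi> - h *\<^sub>R \<phi> a)"
    unfolding a(2) by (simp add: a_def scaleR_add_right)
  also have "norm \<dots> \<le> e * (real N * h) + e * h"
    using Suc.IH last by (rule norm_triangle_le[OF add_mono])
  finally show ?case by (simp add: algebra_simps)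
qed

definition orbit_average ::
    "real \<Rightarrow> real \<Rightarrow> (real \<times> real \<Rightarrow> 'a::real_normed_vector) \<Rightarrow> real \<times> real \<Rightarrow> 'a" where
  "orbit_average c T w p = (1 / T) *\<^sub>R integral {0..T} (\<lambda>s. w (p + (s, c * s)))"

definition orbit_mean ::
    "real \<Rightarrow> real \<Rightarrow> nat \<Rightarrow> (real \<times> real \<Rightarrow> 'a::real_normed_vector) \<Rightarrow> real \<times> real \<Rightarrow> 'a" where
  "orbit_mean c T N w p =
     (1 / real N) *\<^sub>R (\<Sum>k<N. w (p + (real k * (T / real N), c * (real k * (T / real N)))))"

lemma orbit_mean_minus_orbit_average_le:
  fixes w :: "real \<times> real \<Rightarrow> 'a::banach"
  assumes cont: "continuous_on UNIV w" and T: "T > 0" and N: "N > 0"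
    and osc: "\<And>s t. \<bar>s - t\<bar> \<le> T / real N \<Longrightarrow> norm (w (p + (s, c * s)) - w (p + (t, c * t))) \<le> e"
  shows "norm (orbit_mean c T N w p - orbit_average c T w p) \<le> e"
proof -
  define h where "h = T / real N"
  define \<phi> where "\<phi> s = w (p + (s, c * s))" for s
  have h: "h > 0" "T = real N * h" using T N unfolding h_def by auto
  have "continuous_on UNIV \<phi>"
    unfolding \<phi>_def using cont
    by (rule continuous_on_compose2[OF _ _ subset_UNIV]) (intro continuous_intros)
  then have err: "norm (integral {0..T} \<phi> - h *\<^sub>R (\<Sum>k<N. \<phi> (real k * h))) \<le> e * T"
    using integral_left_Riemann_sum_error[of \<phi> h e N] osc h unfolding \<phi>_def h_def by simp
  have "orbit_mean c T N w p - orbit_average c T w p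
      = (1 / T) *\<^sub>R (h *\<^sub>R (\<Sum>k<N. \<phi> (real k * h)) - integral {0..T} \<phi>)"
    unfolding orbit_mean_def orbit_average_def \<phi>_def h_def using h N
    by (simp add: scaleR_diff_right)
  then have "norm (orbit_mean c T N w p - orbit_average c T w p)
      = (1 / T) * norm (integral {0..T} \<phi> - h *\<^sub>R (\<Sum>k<N. \<phi> (real k * h)))"
    using T by (simp add: norm_minus_commute)
  also have "\<dots> \<le> (1 / T) * (e * T)"
    using err T by (intro mult_left_mono) auto
  finally show ?thesis using T by simp
qed

lemma orbit_mean_tendsto_orbit_average:
  fixes w :: "real \<times> real \<Rightarrow> 'a::banach"
  assumes uc: "uniformly_continuous_on UNIV w" and "T > 0" "e > 0"
  shows "\<forall>\<^sub>F N in sequentially. \<forall>p. norm (orbit_mean c T N w p - orbit_average c T w p) \<le> e"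
proof -
  obtain d where d: "d > 0" "\<And>p q. p \<in> UNIV \<Longrightarrow> q \<in> UNIV \<Longrightarrow> dist q p < d \<Longrightarrow> dist (w q) (w p) < e"
    using uniformly_continuous_onE[OF uc \<open>e > 0\<close>] by blast
  have "\<forall>p. norm (orbit_mean c T N w p - orbit_average c T w p) \<le> e"
    if N: "real N > T * (1 + \<bar>c\<bar>) / d" for N
  proof
    fix p
    have "T * (1 + \<bar>c\<bar>) / d > 0" using \<open>T > 0\<close> d(1) by (intro divide_pos_pos mult_pos_pos) auto
    then have N0: "real N > 0" using N by linarith
    have hd: "(1 + \<bar>c\<bar>) * (T / real N) < d"
      using N N0 d(1) by (simp add: field_simps)
    have "norm (w (p + (s, c * s)) - w (p + (t, c * t))) \<le> e" if "\<bar>s - t\<bar> \<le> T / real N" for s t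
    proof -
      have "dist (p + (s, c * s)) (p + (t, c * t)) \<le> \<bar>s - t\<bar> + \<bar>c\<bar> * \<bar>s - t\<bar>"
        using norm_Pair_le[of "s - t" "c * s - c * t"]
        by (simp add: dist_norm abs_mult right_diff_distrib[symmetric])
      also have "\<dots> = (1 + \<bar>c\<bar>) * \<bar>s - t\<bar>" by (simp add: algebra_simps)
      also have "\<dots> \<le> (1 + \<bar>c\<bar>) * (T / real N)" using that by (intro mult_left_mono) auto
      finally have "dist (p + (s, c * s)) (p + (t, c * t)) < d" using hd by linarith
      from d(2)[OF UNIV_I UNIV_I this] show ?thesis by (simp add: dist_norm)
    qed
    then show "norm (orbit_mean c T N w p - orbit_average c T w p) \<le> e"
      using orbit_mean_minus_orbit_average_le[OF uniformly_continuous_imp_continuous[OF uc] \<open>T > 0\<close>]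
        N0 by simp
  qed
  moreover have "\<forall>\<^sub>F N in sequentially. real N > T * (1 + \<bar>c\<bar>) / d"
    using filterlim_real_sequentially unfolding filterlim_at_top_dense by blast
  ultimately show ?thesis by (auto elim: eventually_mono)
qed

lemma integral_orbit_torus_periodic:
  fixes w :: "real \<times> real \<Rightarrow> 'a::banach"
  assumes per: "torus_periodic b c w" and "c \<noteq> 0" "b > 0"
  shows "integral {0..\<bar>b / c\<bar>} (\<lambda>s. w ((t, x) + (s, c * s)))
       = integral {0..\<bar>b / c\<bar>} (\<lambda>s. w (s, x - c * t + c * s))"
proof -
  define \<phi> where "\<phi> s = w (s, x - c * t + c * s)" for s
  have "\<phi> (s + \<bar>b / c\<bar>) = \<phi> s" for s
    using torus_periodic_orbit[OF per \<open>c \<noteq> 0\<close>, of "(s, x - c * t + c * s)"]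
    unfolding \<phi>_def by (simp add: algebra_simps)
  from integral_periodic_shift[of "\<bar>b / c\<bar>" \<phi> t, OF _ this] assms
  have "integral {0..\<bar>b / c\<bar>} (\<lambda>s. \<phi> (s + t)) = integral {0..\<bar>b / c\<bar>} \<phi>" by simp
  then show ?thesis unfolding \<phi>_def by (simp add: algebra_simps)
qed

lemma orbit_has_vector_derivative:
  assumes "\<And>p. v differentiable (at p)"
  shows "((\<lambda>s. v (q + (s, c * s))) has_vector_derivative
           pd_t v (q + (s, c * s)) + c *\<^sub>R pd_x v (q + (s, c * s))) (at s within S)"
proof -
  let ?p = "q + (s, c * s)"
  have "((\<lambda>s. q + (s, c * s)) has_vector_derivative (1, c)) (at s within S)"
    unfolding has_vector_derivative_def by (auto intro!: derivative_eq_intros)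
  moreover have "(v has_derivative frechet_derivative v (at ?p))
      (at ?p within (\<lambda>s. q + (s, c * s)) ` S)"
    using assms frechet_derivative_works has_derivative_at_withinI by blast
  ultimately have "((v \<circ> (\<lambda>s. q + (s, c * s))) has_vector_derivative
      frechet_derivative v (at ?p) (1, c)) (at s within S)"
    by (rule vector_derivative_diff_chain_within)
  moreover have "frechet_derivative v (at ?p) (1, c) = pd_t v ?p + c *\<^sub>R pd_x v ?p"
  proof -
    have lin: "linear (frechet_derivative v (at ?p))"
      using assms frechet_derivative_works has_derivative_linear by blast
    have "(1, c) = (1, 0) + c *\<^sub>R (0, 1)" by simp
    then show ?thesis unfolding pd_t_def pd_x_def by (metis linear_add[OF lin] linear_scale[OF lin])
  qed
  ultimately show ?thesis by (simp add: o_def)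
qed

text \<open>\<open>v\<^sub>t + c v\<^sub>x\<close> is the derivative of \<open>v\<close> along the flow, which is periodic with period \<open>\<bar>b / c\<bar>\<close>.\<close>
lemma integral_orbit_pd_t:
  assumes v: "v \<in> W b c" and "c \<noteq> 0" "b > 0"
  shows "integral {0..\<bar>b / c\<bar>} (\<lambda>s. pd_t v (q + (s, c * s)))
       = - c *\<^sub>R integral {0..\<bar>b / c\<bar>} (\<lambda>s. pd_x v (q + (s, c * s)))"
proof -
  define T where "T = \<bar>b / c\<bar>"
  have T: "T > 0" using assms unfolding T_def by simp
  have diff: "\<And>p. v differentiable (at p)" and per: "torus_periodic b c v"
    and cont: "continuous_on UNIV (pd_t v)" "continuous_on UNIV (pd_x v)"
    using v unfolding mem_W_iff by blast+
  have "((\<lambda>s. pd_t v (q + (s, c * s)) + c *\<^sub>R pd_x v (q + (s, c * s))) has_integral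
        v (q + (T, c * T)) - v (q + (0, c * 0))) {0..T}"
    using fundamental_theorem_of_calculus[of 0 T "\<lambda>s. v (q + (s, c * s))"]
      orbit_has_vector_derivative[OF diff] T by simp
  moreover have "v (q + (T, c * T)) = v (q + (0, c * 0))"
    using torus_periodic_orbit[OF per \<open>c \<noteq> 0\<close>, of q] unfolding T_def
    by (simp add: zero_prod_def[symmetric])
  ultimately have
    "((\<lambda>s. pd_t v (q + (s, c * s)) + c *\<^sub>R pd_x v (q + (s, c * s))) has_integral 0) {0..T}"
    by simp
  then have "integral {0..T} (\<lambda>s. pd_t v (q + (s, c * s)) + c *\<^sub>R pd_x v (q + (s, c * s))) = 0"
    by (rule integral_unique)
  moreover have "continuous_on UNIV (\<lambda>s. pd_t v (q + (s, c * s)))"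
    and "continuous_on UNIV (\<lambda>s. pd_x v (q + (s, c * s)))"
    by (rule continuous_on_compose2[OF cont(1) _ subset_UNIV]
        continuous_on_compose2[OF cont(2) _ subset_UNIV];
        intro continuous_intros)+
  then have "(\<lambda>s. pd_t v (q + (s, c * s))) integrable_on {0..T}"
    and "(\<lambda>s. c *\<^sub>R pd_x v (q + (s, c * s))) integrable_on {0..T}"
    by (auto intro!: integrable_continuous_interval continuous_on_scaleR
        intro: continuous_on_subset)
  ultimately have "integral {0..T} (\<lambda>s. pd_t v (q + (s, c * s)))
      + c *\<^sub>R integral {0..T} (\<lambda>s. pd_x v (q + (s, c * s))) = 0"
    by (simp add: integral_add)
  then show ?thesis
    unfolding T_def[symmetric] by (simp add: eq_neg_iff_add_eq_0)
qed

lemma orbit_profile_C1_per: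
  fixes T :: real
  assumes v: "v \<in> W b c"
  defines "F \<equiv> \<lambda>\<xi>. (1 / T) *\<^sub>R integral {0..T} (\<lambda>s. v (s, \<xi> + c * s))"
  shows "F \<in> C1_per b"
    and "vector_derivative F (at \<xi>) = (1 / T) *\<^sub>R integral {0..T} (\<lambda>s. pd_x v (s, \<xi> + c * s))"
proof -
  have diff: "\<And>p. v differentiable (at p)" and per: "torus_periodic b c v"
    and cont_x: "continuous_on UNIV (pd_x v)"
    using v unfolding mem_W_iff by blast+
  have cont_flow: "continuous_on UNIV (\<lambda>(\<xi>, s). w (s, \<xi> + c * s))" if "continuous_on UNIV w"
    for w :: "real \<times> real \<Rightarrow> real^'a"
    unfolding case_prod_unfold
    by (rule continuous_on_compose2[OF that _ subset_UNIV]) (intro continuous_intros)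
  have "continuous_on UNIV (\<lambda>s. v (s, \<xi> + c * s))" for \<xi>
    by (rule continuous_on_compose2[OF W_continuous[OF v] _ subset_UNIV]) (intro continuous_intros)
  then have int: "(\<lambda>s. v (s, \<xi> + c * s)) integrable_on {0..T}" for \<xi>
    by (auto intro: integrable_continuous_interval continuous_on_subset)
  have "((\<lambda>\<xi>. v (s, \<xi> + c * s)) has_vector_derivative pd_x v (s, \<xi> + c * s)) (at \<xi> within UNIV)"
    for \<xi> s
  proof -
    have "((\<lambda>\<xi>. (s, \<xi> + c * s)) has_vector_derivative (0, 1)) (at \<xi>)"
      unfolding has_vector_derivative_def by (auto intro!: derivative_eq_intros)
    moreover have "(v has_derivative frechet_derivative v (at (s, \<xi> + c * s)))
        (at (s, \<xi> + c * s) within range (\<lambda>\<xi>. (s, \<xi> + c * s)))"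
      using diff frechet_derivative_works has_derivative_at_withinI by blast
    ultimately have "((v \<circ> (\<lambda>\<xi>. (s, \<xi> + c * s))) has_vector_derivative
        frechet_derivative v (at (s, \<xi> + c * s)) (0, 1)) (at \<xi>)"
      by (rule vector_derivative_diff_chain_within)
    then show ?thesis unfolding pd_x_def by (simp add: o_def)
  qed
  then have "((\<lambda>\<xi>. integral (cbox 0 T) (\<lambda>s. v (s, \<xi> + c * s))) has_vector_derivative
      integral (cbox 0 T) (\<lambda>s. pd_x v (s, \<xi> + c * s))) (at \<xi> within UNIV)" for \<xi>
    using int continuous_on_subset[OF cont_flow[OF cont_x]]
    by (intro leibniz_rule_vector_derivative[where f="\<lambda>\<xi> s. v (s, \<xi> + c * s)"]) auto
  then have "((\<lambda>\<xi>. integral {0..T} (\<lambda>s. v (s, \<xi> + c * s))) has_vector_derivative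
      integral {0..T} (\<lambda>s. pd_x v (s, \<xi> + c * s))) (at \<xi>)" for \<xi>
    by simp
  from bounded_linear.has_vector_derivative[OF bounded_linear_scaleR_right this]
  have F_deriv:
    "(F has_vector_derivative (1 / T) *\<^sub>R integral {0..T} (\<lambda>s. pd_x v (s, \<xi> + c * s))) (at \<xi>)" for \<xi>
    unfolding F_def .
  then show F'_eq:
    "vector_derivative F (at \<xi>) = (1 / T) *\<^sub>R integral {0..T} (\<lambda>s. pd_x v (s, \<xi> + c * s))" for \<xi>
    by (rule vector_derivative_at)
  have "continuous_on UNIV (\<lambda>\<xi>. integral {0..T} (\<lambda>s. pd_x v (s, \<xi> + c * s)))"
    using integral_continuous_on_param[OF continuous_on_subset[OF cont_flow[OF cont_x]]] by simp
  then have "continuous_on UNIV (\<lambda>\<xi>. vector_derivative F (at \<xi>))"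
    unfolding F'_eq by (intro continuous_intros)
  moreover have "F (\<xi> + b) = F \<xi>" for \<xi>
  proof -
    have "v (s, \<xi> + b + c * s) = v (s, \<xi> + c * s)" for s
      using per unfolding torus_periodic_def by (metis add.commute add.left_commute)
    then show ?thesis unfolding F_def by simp
  qed
  ultimately show "F \<in> C1_per b"
    unfolding C1_per_def using F_deriv differentiableI_vector by blast
qed

lemma orbit_average_travelling_wave:
  assumes v: "v \<in> W b c" and "c \<noteq> 0" "b > 0"
  defines "T \<equiv> \<bar>b / c\<bar>"
  shows "orbit_average c T v \<in> Sigma_tw b c"
    and "pd_t (orbit_average c T v) = orbit_average c T (pd_t v)"
    and "pd_x (orbit_average c T v) = orbit_average c T (pd_x v)"
proof -
  define F where "F = (\<lambda>\<xi>. (1 / T) *\<^sub>R integral {0..T} (\<lambda>s. v (s, \<xi> + c * s)))"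
  define G where "G = (\<lambda>\<xi>. (1 / T) *\<^sub>R integral {0..T} (\<lambda>s. pd_x v (s, \<xi> + c * s)))"
  have F: "F \<in> C1_per b" "\<And>\<xi>. vector_derivative F (at \<xi>) = G \<xi>"
    using orbit_profile_C1_per[OF v, of T] unfolding F_def G_def by simp_all
  then have diff: "\<And>\<xi>. F differentiable (at \<xi>)" unfolding C1_per_def by blast
  have per: "torus_periodic b c v" "torus_periodic b c (pd_x v)"
    using v W_pd_torus_periodic[OF v] unfolding mem_W_iff by blast+
  have avg_eq:
    "orbit_average c T w (t, x) = (1 / T) *\<^sub>R integral {0..T} (\<lambda>s. w (s, x - c * t + c * s))"
    if "torus_periodic b c w" for w :: "real \<times> real \<Rightarrow> real^'a" and t x
    using integral_orbit_torus_periodic[OF that assms(2,3)]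
    unfolding orbit_average_def T_def by simp
  have wave: "orbit_average c T v = (\<lambda>(t, x). F (x - c * t))"
    using avg_eq[OF per(1)] unfolding F_def by (auto simp: fun_eq_iff)
  then show "orbit_average c T v \<in> Sigma_tw b c"
    using travelling_wave_in_Sigma_tw[OF F(1) \<open>c \<noteq> 0\<close>] by simp
  have avg_x: "orbit_average c T (pd_x v) (t, x) = G (x - c * t)" for t x
    using avg_eq[OF per(2)] unfolding G_def by simp
  show "pd_x (orbit_average c T v) = orbit_average c T (pd_x v)"
    unfolding fun_eq_iff wave
    by (auto simp: travelling_wave_pd[OF diff] F(2) avg_x)
  have "orbit_average c T (pd_t v) (t, x) = - c *\<^sub>R orbit_average c T (pd_x v) (t, x)" for t x
    using integral_orbit_pd_t[OF v assms(2,3), of "(t, x)"]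
    unfolding orbit_average_def T_def by simp
  then show "pd_t (orbit_average c T v) = orbit_average c T (pd_t v)"
    unfolding fun_eq_iff wave
    by (auto simp: travelling_wave_pd[OF diff] F(2) avg_x)
qed

lemma orbit_mean_in_W:
  assumes v: "v \<in> W b c"
  shows "orbit_mean c T N v \<in> W b c"
    and "pd_t (orbit_mean c T N v) = orbit_mean c T N (pd_t v)"
    and "pd_x (orbit_mean c T N v) = orbit_mean c T N (pd_x v)"
proof -
  define \<tau> where "\<tau> k = (real k * (T / real N), c * (real k * (T / real N)))" for k
  have mean: "orbit_mean c T N w = (\<lambda>p. (1 / real N) *\<^sub>R (\<Sum>k<N. w (p + \<tau> k)))"
    for w :: "real \<times> real \<Rightarrow> real^'a"
    unfolding orbit_mean_def \<tau>_def by (simp add: fun_eq_iff)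
  have shift_W: "(\<lambda>p. v (p + \<tau> k)) \<in> W b c" for k
    by (rule W_translate[OF v])
  then have sum_W: "(\<lambda>p. \<Sum>k<N. v (p + \<tau> k)) \<in> W b c"
    by (intro W_sum) auto
  then show "orbit_mean c T N v \<in> W b c"
    unfolding mean by (rule W_scaleR)
  have diff: "\<And>p. v differentiable (at p)" using v unfolding mem_W_iff by blast
  have sum_diff: "(\<lambda>p. \<Sum>k<N. v (p + \<tau> k)) differentiable (at p)" for p
    using sum_W unfolding mem_W_iff by blast
  have "(\<lambda>p. v (p + \<tau> k)) differentiable (at p)" for k p
    using shift_W unfolding mem_W_iff by blast
  then show "pd_t (orbit_mean c T N v) = orbit_mean c T N (pd_t v)"
    and "pd_x (orbit_mean c T N v) = orbit_mean c T N (pd_x v)"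
    unfolding mean by (simp_all add: fun_eq_iff pd_scaleR[OF sum_diff] pd_sum pd_translate diff)
qed

section \<open>Stationary points\<close>

lemma frechet_on_W_orbit_mean:
  assumes F: "frechet_on_W b c (action b c L) u D" and u: "u \<in> Sigma_tw b c" and v: "v \<in> W b c"
    and "c \<noteq> 0" "b > 0" "N > 0"
  shows "D (orbit_mean c T N v) = D v"
proof -
  define \<tau> where "\<tau> k = (real k * (T / real N), c * (real k * (T / real N)))" for k
  have shift_W: "\<And>k. (\<lambda>p. v (p + \<tau> k)) \<in> W b c"
    by (rule W_translate[OF v])
  have "orbit_mean c T N v = (\<lambda>p. (1 / real N) *\<^sub>R (\<Sum>k<N. v (p + \<tau> k)))"
    unfolding orbit_mean_def \<tau>_def by (simp add: fun_eq_iff)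
  then have "D (orbit_mean c T N v) = (1 / real N) * D (\<lambda>p. \<Sum>k<N. v (p + \<tau> k))"
    using frechet_on_W_scaleR[OF F W_sum[of "{..<N}", OF _ shift_W]] by simp
  also have "D (\<lambda>p. \<Sum>k<N. v (p + \<tau> k)) = (\<Sum>k<N. D (\<lambda>p. v (p + \<tau> k)))"
    by (rule frechet_on_W_sum[OF F]) (simp_all add: shift_W)
  also have "\<dots> = real N * D v"
  proof -
    have "D (\<lambda>p. v (p + \<tau> k)) = D v" for k
      unfolding \<tau>_def by (rule frechet_on_W_translate_orbit[OF F u v assms(4,5)])
    then show ?thesis by simp
  qed
  finally show ?thesis using \<open>N > 0\<close> by simp
qed

lemma c1norm_orbit_mean_minus_orbit_average:
  assumes v: "v \<in> W b c" and cb: "c \<noteq> 0" "b > 0" and "e > 0"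
  defines "T \<equiv> \<bar>b / c\<bar>"
  shows "\<forall>\<^sub>F N in sequentially.
           c1norm (\<lambda>p. orbit_mean c T N v p + (- 1) *\<^sub>R orbit_average c T v p) \<le> 3 * e"
proof -
  have T: "T > 0" using cb unfolding T_def by simp
  have per: "torus_periodic b c v" "torus_periodic b c (pd_t v)" "torus_periodic b c (pd_x v)"
    and cont: "continuous_on UNIV (pd_t v)" "continuous_on UNIV (pd_x v)"
    using v W_pd_torus_periodic[OF v] unfolding mem_W_iff by blast+
  have uc: "uniformly_continuous_on UNIV v" "uniformly_continuous_on UNIV (pd_t v)"
    "uniformly_continuous_on UNIV (pd_x v)"
    using torus_periodic_uniformly_continuous[OF per(1) W_continuous[OF v] cb]
      torus_periodic_uniformly_continuous[OF per(2) cont(1) cb]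
      torus_periodic_uniformly_continuous[OF per(3) cont(2) cb] .
  define a where "a = orbit_average c T v"
  have aW: "a \<in> W b c"
    and a_pd: "pd_t a = orbit_average c T (pd_t v)" "pd_x a = orbit_average c T (pd_x v)"
    using orbit_average_travelling_wave[OF v cb] unfolding a_def T_def Sigma_tw_def by blast+
  have "c1norm (\<lambda>p. orbit_mean c T N v p + (- 1) *\<^sub>R a p) \<le> 3 * e"
    if close: "\<forall>p. norm (orbit_mean c T N v p - orbit_average c T v p) \<le> e"
      "\<forall>p. norm (orbit_mean c T N (pd_t v) p - orbit_average c T (pd_t v) p) \<le> e"
      "\<forall>p. norm (orbit_mean c T N (pd_x v) p - orbit_average c T (pd_x v) p) \<le> e" for N
  proof -
    define m where "m = orbit_mean c T N v"
    have m_pd: "pd_t m = orbit_mean c T N (pd_t v)" "pd_x m = orbit_mean c T N (pd_x v)"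
      using orbit_mean_in_W[OF v] unfolding m_def by blast+
    have diff: "\<And>p. m differentiable (at p)" "\<And>p. a differentiable (at p)"
      using orbit_mean_in_W(1)[OF v] aW unfolding m_def mem_W_iff by blast+
    have "\<And>p. norm (m p + (- 1) *\<^sub>R a p) \<le> e" "\<And>p. norm (pd_t (\<lambda>p. m p + (- 1) *\<^sub>R a p) p) \<le> e"
      "\<And>p. norm (pd_x (\<lambda>p. m p + (- 1) *\<^sub>R a p) p) \<le> e"
      using close[rule_format] unfolding pd_add_scaleR[OF diff] m_pd a_pd
      by (simp_all add: m_def a_def)
    from c1norm_bounded(2)[OF this] show ?thesis unfolding m_def by simp
  qed
  moreover have "\<forall>\<^sub>F N in sequentially.
      (\<forall>p. norm (orbit_mean c T N v p - orbit_average c T v p) \<le> e)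
      \<and> (\<forall>p. norm (orbit_mean c T N (pd_t v) p - orbit_average c T (pd_t v) p) \<le> e)
      \<and> (\<forall>p. norm (orbit_mean c T N (pd_x v) p - orbit_average c T (pd_x v) p) \<le> e)"
    using orbit_mean_tendsto_orbit_average[OF uc(1) T \<open>e > 0\<close>]
      orbit_mean_tendsto_orbit_average[OF uc(2) T \<open>e > 0\<close>]
      orbit_mean_tendsto_orbit_average[OF uc(3) T \<open>e > 0\<close>]
    by (intro eventually_conj)
  ultimately show ?thesis unfolding a_def by (auto elim: eventually_mono)
qed

lemma frechet_on_W_orbit_average:
  assumes F: "frechet_on_W b c (action b c L) u D" and u: "u \<in> Sigma_tw b c" and v: "v \<in> W b c"
    and cb: "c \<noteq> 0" "b > 0"
  shows "D (orbit_average c \<bar>b / c\<bar> v) = D v"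
proof -
  define T where "T = \<bar>b / c\<bar>"
  define a where "a = orbit_average c T v"
  have aW: "a \<in> W b c"
    using orbit_average_travelling_wave(1)[OF v cb] unfolding a_def T_def Sigma_tw_def by blast
  obtain K where K: "\<And>w. w \<in> W b c \<Longrightarrow> \<bar>D w\<bar> \<le> K * c1norm w"
    using F unfolding frechet_on_W_def by blast
  define M where "M = max K 0 + 1"
  have M: "M > 0" "K \<le> M" unfolding M_def by auto
  have bound: "\<bar>D v - D a\<bar> \<le> M * (3 * e)" if "e > 0" for e
  proof -
    have "\<forall>\<^sub>F N in sequentially. N > 0 \<and> c1norm (\<lambda>p. orbit_mean c T N v p + (- 1) *\<^sub>R a p) \<le> 3 * e"
      using eventually_gt_at_top[of 0] c1norm_orbit_mean_minus_orbit_average[OF v cb \<open>e > 0\<close>]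
      unfolding a_def T_def by (intro eventually_conj)
    then obtain N where N: "N > 0"
      and small: "c1norm (\<lambda>p. orbit_mean c T N v p + (- 1) *\<^sub>R a p) \<le> 3 * e"
      using eventually_happens'[OF sequentially_bot] by blast
    define d where "d = (\<lambda>p. orbit_mean c T N v p + (- 1) *\<^sub>R a p)"
    have mW: "orbit_mean c T N v \<in> W b c" using orbit_mean_in_W(1)[OF v] .
    have dW: "d \<in> W b c" unfolding d_def using W_add_scaleR[OF mW aW] .
    have "D d = D v - D a"
      unfolding d_def frechet_on_W_add[OF F mW W_scaleR[OF aW]] frechet_on_W_scaleR[OF F aW]
        frechet_on_W_orbit_mean[OF F u v cb N] by simp
    moreover have "K * c1norm d \<le> M * (3 * e)"
      using M small W_c1norm_nonneg[OF dW cb] unfolding d_def by (intro mult_mono) auto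
    ultimately show ?thesis using K[OF dW] by simp
  qed
  have "\<bar>D v - D a\<bar> \<le> 0 + e" if "e > 0" for e
    using bound[of "e / (3 * M)"] that M by simp
  then have "\<bar>D v - D a\<bar> \<le> 0" by (rule field_le_epsilon)
  then show ?thesis unfolding a_def T_def by simp
qed

lemma stationary_on_Sigma_tw_imp_W:
  assumes F: "frechet_on_W b c (action b c L) u D" and u: "u \<in> Sigma_tw b c"
    and stat: "stationary_on (Sigma_tw b c) (action b c L) u" and cb: "c \<noteq> 0" "b > 0"
  shows "stationary_on (W b c) (action b c L) u"
proof -
  have "((\<lambda>\<epsilon>. action b c L (\<lambda>p. u p + \<epsilon> *\<^sub>R v p)) has_real_derivative 0) (at 0)"
    if v: "v \<in> W b c" for v
  proof -
    define a where "a = orbit_average c \<bar>b / c\<bar> v"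
    have aS: "a \<in> Sigma_tw b c" using orbit_average_travelling_wave(1)[OF v cb] unfolding a_def .
    then have aW: "a \<in> W b c" unfolding Sigma_tw_def by blast
    have "((\<lambda>\<epsilon>. action b c L (\<lambda>p. u p + \<epsilon> *\<^sub>R a p)) has_real_derivative 0) (at 0)"
      using stat aS unfolding stationary_on_def by blast
    with frechet_on_W_directional_derivative[OF F aW cb] have "D a = 0"
      by (rule DERIV_unique)
    then have "D v = 0" using frechet_on_W_orbit_average[OF F u v cb] unfolding a_def by simp
    then show ?thesis using frechet_on_W_directional_derivative[OF F v cb] by simp
  qed
  moreover have "u \<in> W b c" using u unfolding Sigma_tw_def by blast
  ultimately show ?thesis unfolding stationary_on_def by blast
qed

theorem proposition3:
  fixes b c :: real and L :: "(real^'d) \<times> (real^'d) \<times> (real^'d) \<Rightarrow> real"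
  assumes "c \<noteq> 0" and "b > 0"
    and "C1_on_W b c (action b c L)"
  shows "(\<forall>u\<in>Sigma_tw b c.
            stationary_on (W b c) (action b c L) u \<longleftrightarrow>
            stationary_on (Sigma_tw b c) (action b c L) u)
       \<and> (\<forall>u::real \<times> real \<Rightarrow> real^'d \<in> Sigma_tw b c. \<exists>f\<in>C1_per b. u = (\<lambda>(t, x). f (x - c * t)))
       \<and> (\<forall>f\<in>C1_per b. (\<lambda>(t, x). f (x - c * t)) \<in> Sigma_tw b c
            \<and> action b c L (\<lambda>(t, x). f (x - c * t))
              = (b / c) * integral {0..b}
                  (\<lambda>\<xi>. L (f \<xi>, - c *\<^sub>R vector_derivative f (at \<xi>), vector_derivative f (at \<xi>))))"
proof -
  obtain DF where DF: "\<And>u. u \<in> W b c \<Longrightarrow> frechet_on_W b c (action b c L) u (DF u)"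
    using assms(3) unfolding C1_on_W_def by blast
  have "stationary_on (W b c) (action b c L) u \<longleftrightarrow> stationary_on (Sigma_tw b c) (action b c L) u"
    if u: "u \<in> Sigma_tw b c" for u :: "real \<times> real \<Rightarrow> real^'d"
  proof
    assume "stationary_on (W b c) (action b c L) u"
    then show "stationary_on (Sigma_tw b c) (action b c L) u"
      using u unfolding stationary_on_def Sigma_tw_def by blast
  next
    assume "stationary_on (Sigma_tw b c) (action b c L) u"
    moreover have "u \<in> W b c" using u unfolding Sigma_tw_def by blast
    ultimately show "stationary_on (W b c) (action b c L) u"
      using stationary_on_Sigma_tw_imp_W[OF DF u _ assms(1,2)] by blast
  qed
  moreover have "\<exists>f\<in>C1_per b. u = (\<lambda>(t, x). f (x - c * t))"
    if "u \<in> Sigma_tw b c" for u :: "real \<times> real \<Rightarrow> real^'d"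
    using Sigma_tw_travelling_wave[OF that] by blast
  moreover note travelling_wave_in_Sigma_tw[OF _ assms(1)] action_travelling_wave[OF _ assms(1,2)]
  ultimately show ?thesis by blast
qed

end
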